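(* Let $F_W: V^n \to \mathbb{R}^{|V|}$ be a transformer with end-to-end Lipschitz constant $\Lambda(W)$, token embedding $E$, and $C_E = \max_{t,t' \in V}\|E(t)-E(t')\|$. Let $e = (n^*, f, \phi, \tau^*, \varepsilon_{\mathrm{fit}})$ be a parametrized expert, i.e. $n^* \in V^n$, $\phi: V^* \to \mathbb{R}^k$, $f: \mathbb{R}^k \to \mathbb{R}^{|V|}$, $\tau^*>0$, and $\|F_W(n^* ) - f(\phi(n^* ))\| \le \varepsilon_{\mathrm{fit}}$. Assume $\phi$ extracts the parameter vector at the divergence embedding, so that $\|\phi(x) - \phi(n^* )\| \le C_E$ for every input $x$, and that $f$ is Lipschitz with $\mathrm{Lip}(f) \le \Lambda(W)$. Then for every input $x \in V^n$, \[ \|F_W(x) - f(\phi(x))\| \le \varepsilon_{\mathrm{fit}} + 2\Lambda(W) C_E . \] In particular, if $\delta > \varepsilon_{\mathrm{fit}} + 2\Lambda(W) C_E$, then $\|F_W(x) - f(\phi(x))\| \le \delta$ for every input $x$, with no restriction on the trie distance $d_{\mathcal T}(x,n^* )$.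
   Context: $V$ is a finite vocabulary, $P_{\mathcal M}$ a generative model over $V^*$, and the trie metric is $d_{\mathcal T}(s,s') = -\log_2 P_{\mathcal M}(s \wedge s')$ where $s\wedge s'$ is the longest common prefix. $F_W$ is a pre-norm transformer with embedding $E$; $\Lambda(W) = \prod_{\ell=1}^L \kappa^{(\ell)}$ where $\kappa^{(\ell)} = (1 + L_{\mathrm{attn}}^{(\ell)}\gamma^{(\ell)}/\varepsilon_{\mathrm{LN}})(1 + \|W_{\mathrm{MLP}}^{(\ell)}\|_{\mathrm{op}}\gamma^{(\ell)}/\varepsilon_{\mathrm{LN}})$, $L_{\mathrm{attn}}^{(\ell)} = \|W_V^{(\ell)}\|_{\mathrm{op}} + \frac{1}{2\sqrt{d_{\mathrm{head}}}}\|W_Q^{(\ell)}\|_{\mathrm{op}}\|W_K^{(\ell)}\|_{\mathrm{op}}\max_j\|\mathbf v_j\|$ (LayerNorm scale $\gamma^{(\ell)}$, stability constant $\varepsilon_{\mathrm{LN}}$, MLP norm including activation Lipschitz constants). This constant satisfies: for any $s,s'\in V^n$ first differing at position $\bar d+1$, $\|F_W(s)-F_W(s')\| \le \Lambda(W)\|E(s_{\bar d+1}) - E(s'_{\bar d+1})\|$. *)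

theory Defs
  imports "HOL-Analysis.Analysis"
begin

text \<open>Vocabulary V is a finite type 'v; inputs in V^n are lists of length n;
  outputs in R^|V| are vectors of type real^'v; the token embedding is
  E :: 'v => real^'d.\<close>

definition embedding_diameter :: "('v::finite \<Rightarrow> real^'d) \<Rightarrow> real" where
  "embedding_diameter E = Max {norm (E t - E t') | t t'. True}"

text \<open>Two sequences s, s' of length n first differ at position dbar+1
  (0-based index dbar).\<close>
definition first_diff_at :: "'v list \<Rightarrow> 'v list \<Rightarrow> nat \<Rightarrow> bool" where
  "first_diff_at s s' dbar \<longleftrightarrow>
     dbar < length s \<and> dbar < length s' \<and>
     (\<forall>i<dbar. s ! i = s' ! i) \<and> s ! dbar \<noteq> s' ! dbar"

definition end_to_end_lipschitz ::
  "nat \<Rightarrow> ('v list \<Rightarrow> real^'v) \<Rightarrow> ('v \<Rightarrow> real^'d) \<Rightarrow> real \<Rightarrow> bool" where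
  "end_to_end_lipschitz n F E \<Lambda> \<longleftrightarrow>
     (\<forall>s s' dbar. length s = n \<longrightarrow> length s' = n \<longrightarrow> first_diff_at s s' dbar \<longrightarrow>
        norm (F s - F s') \<le> \<Lambda> * norm (E (s ! dbar) - E (s' ! dbar)))"

end

theory Submission
  imports Defs
begin

text \<open>Compare \<open>F x\<close> with \<open>f (\<phi> x)\<close> through the anchor \<open>n*\<close>:
  \<open>F x \<rightarrow> F n* \<rightarrow> f (\<phi> n*) \<rightarrow> f (\<phi> x)\<close>. The middle leg is the fit error. Any two
  inputs of length \<open>n\<close> differ at their first divergence by at most the embedding
  diameter \<open>C_E\<close>, so the end-to-end Lipschitz property bounds the first leg by
  \<open>\<Lambda> C_E\<close>; the last leg is at most \<open>Lip(f) \<parallel>\<phi> x - \<phi> n*\<parallel> \<le> \<Lambda> C_E\<close>.\<close>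

lemma norm_diff_le_embedding_diameter:
  fixes E :: "'v::finite \<Rightarrow> real^'d"
  shows "norm (E t - E t') \<le> embedding_diameter E"
proof -
  have "{norm (E t - E t') | t t'. True} = (\<lambda>(t, t'). norm (E t - E t')) ` UNIV"
    by auto
  then have "finite {norm (E t - E t') | t t'. True}"
    by simp
  then show ?thesis
    unfolding embedding_diameter_def by (rule Max_ge) blast
qed

lemma embedding_diameter_nonneg: "0 \<le> embedding_diameter (E :: 'v::finite \<Rightarrow> real^'d)"
  using norm_diff_le_embedding_diameter[of E undefined undefined] by simp

lemma first_diff_at_exists:
  assumes "length s = length s'" and "s \<noteq> s'"
  obtains d where "first_diff_at s s' d"
proof -
  define P where "P i \<longleftrightarrow> i < length s \<and> s ! i \<noteq> s' ! i" for i
  define d where "d = (LEAST i. P i)"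
  have "\<exists>i. P i"
    using assms nth_equalityI unfolding P_def by blast
  then have "P d"
    unfolding d_def by (rule LeastI_ex)
  moreover have "s ! i = s' ! i" if "i < d" for i
    using not_less_Least[of i P] that \<open>P d\<close> unfolding d_def P_def by fastforce
  ultimately have "first_diff_at s s' d"
    using assms(1) unfolding first_diff_at_def P_def by simp
  then show thesis ..
qed

lemma end_to_end_lipschitz_le_diameter:
  assumes "end_to_end_lipschitz n F E \<Lambda>" and "0 \<le> \<Lambda>"
    and "length s = n" and "length s' = n"
  shows "norm (F s - F s') \<le> \<Lambda> * embedding_diameter E"
proof (cases "s = s'")
  case True
  then show ?thesis
    using mult_nonneg_nonneg[OF assms(2) embedding_diameter_nonneg] by simp
next
  case False
  then obtain d where "first_diff_at s s' d"
    using assms(3,4) first_diff_at_exists by metis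
  then have "norm (F s - F s') \<le> \<Lambda> * norm (E (s ! d) - E (s' ! d))"
    using assms unfolding end_to_end_lipschitz_def by blast
  also have "\<dots> \<le> \<Lambda> * embedding_diameter E"
    using assms(2) norm_diff_le_embedding_diameter by (rule mult_left_mono[rotated])
  finally show ?thesis .
qed

lemma norm_diff_le_via_anchor:
  fixes F :: "'a \<Rightarrow> 'b::real_normed_vector" and \<phi> :: "'a \<Rightarrow> 'c::metric_space"
  assumes "L-lipschitz_on UNIV f"
  shows "norm (F x - f (\<phi> x))
           \<le> norm (F x - F a) + norm (F a - f (\<phi> a)) + L * dist (\<phi> a) (\<phi> x)"
proof -
  have "norm (F x - f (\<phi> x))
          \<le> norm (F x - F a) + norm (F a - f (\<phi> a)) + norm (f (\<phi> a) - f (\<phi> x))"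
    using norm_triangle_ineq[of "F x - F a" "F a - f (\<phi> a)"]
      norm_triangle_ineq[of "F x - f (\<phi> a)" "f (\<phi> a) - f (\<phi> x)"]
    by simp
  moreover have "norm (f (\<phi> a) - f (\<phi> x)) \<le> L * dist (\<phi> a) (\<phi> x)"
    using lipschitz_onD[OF assms] by (simp add: dist_norm)
  ultimately show ?thesis
    by linarith
qed

lemma norm_expert_error_le:
  assumes lip: "end_to_end_lipschitz n F E \<Lambda>" and f_lip: "\<Lambda>-lipschitz_on UNIV f"
    and "length a = n" and "length x = n"
    and \<phi>_bound: "norm (\<phi> x - \<phi> a) \<le> embedding_diameter E"
  shows "norm (F x - f (\<phi> x)) \<le> norm (F a - f (\<phi> a)) + 2 * \<Lambda> * embedding_diameter E"
proof -
  have \<Lambda>_nonneg: "0 \<le> \<Lambda>"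
    using f_lip lipschitz_on_nonneg by blast
  have "norm (F x - F a) \<le> \<Lambda> * embedding_diameter E"
    using end_to_end_lipschitz_le_diameter[OF lip \<Lambda>_nonneg] assms(3,4) by blast
  moreover have "\<Lambda> * dist (\<phi> a) (\<phi> x) \<le> \<Lambda> * embedding_diameter E"
  proof (rule mult_left_mono[OF _ \<Lambda>_nonneg])
    show "dist (\<phi> a) (\<phi> x) \<le> embedding_diameter E"
      using \<phi>_bound by (metis dist_commute dist_norm)
  qed
  ultimately show ?thesis
    using norm_diff_le_via_anchor[OF f_lip, where F = F and \<phi> = \<phi> and x = x and a = a]
    by linarith
qed

theorem mainTheorem2:
  fixes n :: nat
    and F :: "'v::finite list \<Rightarrow> real^'v"
    and E :: "'v \<Rightarrow> real^'d"
    and \<Lambda> :: real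
    and nstar :: "'v list"
    and f :: "real^'k \<Rightarrow> real^'v"
    and \<phi> :: "'v list \<Rightarrow> real^'k"
    and \<tau>star \<epsilon>fit :: real
  assumes lip: "end_to_end_lipschitz n F E \<Lambda>"
    and nstar_len: "length nstar = n"
    and tau_pos: "\<tau>star > 0"
    and fit: "norm (F nstar - f (\<phi> nstar)) \<le> \<epsilon>fit"
    and phi_bound: "\<forall>x. length x = n \<longrightarrow> norm (\<phi> x - \<phi> nstar) \<le> embedding_diameter E"
    and f_lip: "\<Lambda>-lipschitz_on UNIV f"
  shows "(\<forall>x. length x = n \<longrightarrow>
            norm (F x - f (\<phi> x)) \<le> \<epsilon>fit + 2 * \<Lambda> * embedding_diameter E)
       \<and> (\<forall>\<delta>. \<delta> > \<epsilon>fit + 2 * \<Lambda> * embedding_diameter E \<longrightarrow>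
            (\<forall>x. length x = n \<longrightarrow> norm (F x - f (\<phi> x)) \<le> \<delta>))"
proof -
  let ?C = "embedding_diameter E"
  have bound: "norm (F x - f (\<phi> x)) \<le> \<epsilon>fit + 2 * \<Lambda> * ?C" if "length x = n" for x
    using norm_expert_error_le[OF lip f_lip nstar_len that phi_bound[rule_format, OF that]] fit
    by linarith
  show ?thesis
  proof (intro conjI allI impI)
    fix x :: "'v list"
    assume "length x = n"
    then show "norm (F x - f (\<phi> x)) \<le> \<epsilon>fit + 2 * \<Lambda> * ?C"
      by (rule bound)
  next
    fix \<delta> and x :: "'v list"
    assume "\<delta> > \<epsilon>fit + 2 * \<Lambda> * ?C" and "length x = n"
    then show "norm (F x - f (\<phi> x)) \<le> \<delta>"
      using bound[of x] by linarith
  qed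
qed

end
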